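(* Let $\{\nu_k\}_{k\ge0}$ be a sparse sequence of stopping times and define $S_m:=\bigcup_{k\ge0}\{\nu_k=m\}$ for $m\ge0$. Then $\{S_m\}_{m\ge0}$ is sparse.
   Context: $(\Omega,\mathcal{F},\mu)$ is a probability space with filtration $\{\mathcal{F}_k\}_{k\ge0}$, $\mathsf{E}_k=\mathsf{E}[\cdot|\mathcal{F}_k]$. An increasing sequence of stopping times $\{\nu_k\}_{k\ge0}$ is called sparse if, with $E_k=\{\nu_k<\infty\}$, for every $k$ and every $A\subseteq E_k$ with $A\in\mathcal{F}_{\nu_k}$ we have $\mu(A\cap E_{k+1})\le\frac12\mu(A)$. An adapted sequence of sets $\{S_k\}_{k\ge0}$ ($S_k\in\mathcal{F}_k$) is $\eta$-sparse if for every $k\ge0$ and every $\mathcal{F}_k$-measurable $A\subseteq S_k$, $\mu(A\setminus\bigcup_{m\ge k+1}S_m)\ge\eta\mu(A)$; "sparse" means $\frac12$-sparse. *)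

theory Defs
  imports "HOL-Probability.Probability"
begin

definition nat_filtration :: "'a measure \<Rightarrow> (nat \<Rightarrow> 'a measure) \<Rightarrow> bool" where
  "nat_filtration M F \<longleftrightarrow>
     (\<forall>n. space (F n) = space M \<and> sets (F n) \<subseteq> sets M) \<and>
     (\<forall>m n. m \<le> n \<longrightarrow> sets (F m) \<subseteq> sets (F n))"

definition enat_stopping_time :: "'a measure \<Rightarrow> (nat \<Rightarrow> 'a measure) \<Rightarrow> ('a \<Rightarrow> enat) \<Rightarrow> bool" where
  "enat_stopping_time M F \<nu> \<longleftrightarrow> (\<forall>n. {x \<in> space M. \<nu> x \<le> enat n} \<in> sets (F n))"

definition stopped_sets :: "'a measure \<Rightarrow> (nat \<Rightarrow> 'a measure) \<Rightarrow> ('a \<Rightarrow> enat) \<Rightarrow> 'a set set" where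
  "stopped_sets M F \<nu> = {A \<in> sets M. \<forall>n. {x \<in> A. \<nu> x \<le> enat n} \<in> sets (F n)}"

text \<open>Sparse sequence of stopping times (the measure condition), with E_k = {\<nu>_k < \<infinity>}.\<close>
definition sparse_stopping_times :: "'a measure \<Rightarrow> (nat \<Rightarrow> 'a measure) \<Rightarrow> (nat \<Rightarrow> 'a \<Rightarrow> enat) \<Rightarrow> bool" where
  "sparse_stopping_times M F \<nu> \<longleftrightarrow>
     (\<forall>k A. A \<in> stopped_sets M F (\<nu> k) \<and> A \<subseteq> {x \<in> space M. \<nu> k x < \<infinity>} \<longrightarrow>
        measure M (A \<inter> {x \<in> space M. \<nu> (Suc k) x < \<infinity>}) \<le> 1/2 * measure M A)"

definition eta_sparse_sets :: "'a measure \<Rightarrow> (nat \<Rightarrow> 'a measure) \<Rightarrow> real \<Rightarrow> (nat \<Rightarrow> 'a set) \<Rightarrow> bool" where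
  "eta_sparse_sets M F \<eta> S \<longleftrightarrow>
     (\<forall>k. S k \<in> sets (F k)) \<and>
     (\<forall>k A. A \<in> sets (F k) \<and> A \<subseteq> S k \<longrightarrow>
        measure M (A - (\<Union>m\<in>{Suc k..}. S m)) \<ge> \<eta> * measure M A)"

end

theory Submission
  imports Defs
begin

text \<open>Let A \<in> F_m with A \<subseteq> S_m, and let B_k be the part of A on which \<nu>_k is the first
  stopping time to take the value m. Since \<nu>_k = m on B_k, the set B_k lies in F_{\<nu>_k}, and
  sparseness puts at least half of it into {\<nu>_{k+1} = \<infinity>}. By monotonicity no \<nu>_j takes a
  finite value larger than m there, so this half avoids every S_j with j > m. Summing over the
  disjoint pieces B_k gives the bound for A.\<close>

lemma nat_filtration_sets_subset:
  "nat_filtration M F \<Longrightarrow> sets (F n) \<subseteq> sets M"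
  unfolding nat_filtration_def by blast

lemma nat_filtration_sets_mono:
  "nat_filtration M F \<Longrightarrow> m \<le> n \<Longrightarrow> sets (F m) \<subseteq> sets (F n)"
  unfolding nat_filtration_def by blast

lemma enat_stopping_time_eq_sets:
  assumes filt: "nat_filtration M F" and st: "enat_stopping_time M F \<nu>"
  shows "{x \<in> space M. \<nu> x = enat m} \<in> sets (F m)"
proof -
  have le: "{x \<in> space M. \<nu> x \<le> enat n} \<in> sets (F n)" for n
    using st unfolding enat_stopping_time_def by blast
  have "\<nu> x = enat m \<longleftrightarrow> \<nu> x \<le> enat m \<and> (\<forall>n<m. \<not> \<nu> x \<le> enat n)" for x
    by (cases "\<nu> x") (auto, metis le_neq_implies_less order_refl)
  then have "{x \<in> space M. \<nu> x = enat m} =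
      {x \<in> space M. \<nu> x \<le> enat m} - (\<Union>n<m. {x \<in> space M. \<nu> x \<le> enat n})"
    by blast
  also have "\<dots> \<in> sets (F m)"
    using le nat_filtration_sets_mono[OF filt, of _ m]
    by (intro sets.Diff sets.finite_UN) (auto dest: less_imp_le)
  finally show ?thesis .
qed

lemma enat_stopping_times_UN_eq_sets:
  fixes \<nu> :: "nat \<Rightarrow> 'a \<Rightarrow> enat"
  assumes "nat_filtration M F" and "\<And>k. enat_stopping_time M F (\<nu> k)"
  shows "(\<Union>k. {x \<in> space M. \<nu> k x = enat m}) \<in> sets (F m)"
  using enat_stopping_time_eq_sets[OF assms] by (intro sets.countable_UN) blast

lemma enat_stopping_time_finite_sets:
  assumes filt: "nat_filtration M F" and st: "enat_stopping_time M F \<nu>"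
  shows "{x \<in> space M. \<nu> x < \<infinity>} \<in> sets M"
proof -
  have "{x \<in> space M. \<nu> x < \<infinity>} = (\<Union>n. {x \<in> space M. \<nu> x \<le> enat n})"
    by (auto elim!: less_infinityE dest: enat_ile)
  also have "\<dots> \<in> sets M"
    using st nat_filtration_sets_subset[OF filt]
    unfolding enat_stopping_time_def by (intro sets.countable_UN) blast
  finally show ?thesis .
qed

lemma stopped_setsI_constant:
  assumes filt: "nat_filtration M F" and B: "B \<in> sets (F m)"
    and const: "\<And>x. x \<in> B \<Longrightarrow> \<nu> x = enat m"
  shows "B \<in> stopped_sets M F \<nu>"
proof -
  have "{x \<in> B. \<nu> x \<le> enat n} \<in> sets (F n)" for n
  proof (cases "m \<le> n")
    case True
    then have "{x \<in> B. \<nu> x \<le> enat n} = B" using const by auto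
    then show ?thesis using B nat_filtration_sets_mono[OF filt True] by auto
  next
    case False
    then have "{x \<in> B. \<nu> x \<le> enat n} = {}" using const by auto
    then show ?thesis by (metis sets.empty_sets)
  qed
  then show ?thesis
    using B nat_filtration_sets_subset[OF filt] unfolding stopped_sets_def by blast
qed

lemma sparse_stopping_times_half_escapes:
  assumes "finite_measure M" and filt: "nat_filtration M F"
    and st: "enat_stopping_time M F (\<nu> (Suc k))" and sparse: "sparse_stopping_times M F \<nu>"
    and A: "A \<in> stopped_sets M F (\<nu> k)" "A \<subseteq> {x \<in> space M. \<nu> k x < \<infinity>}"
  shows "1/2 * measure M A \<le> measure M (A - {x \<in> space M. \<nu> (Suc k) x < \<infinity>})"
proof -
  interpret finite_measure M by fact
  have "A \<in> sets M" using A(1) unfolding stopped_sets_def by blast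
  then have "measure M (A - {x \<in> space M. \<nu> (Suc k) x < \<infinity>}) =
      measure M A - measure M (A \<inter> {x \<in> space M. \<nu> (Suc k) x < \<infinity>})"
    using finite_measure_Diff' enat_stopping_time_finite_sets[OF filt st] by blast
  moreover have "measure M (A \<inter> {x \<in> space M. \<nu> (Suc k) x < \<infinity>}) \<le> 1/2 * measure M A"
    using sparse A unfolding sparse_stopping_times_def by blast
  ultimately show ?thesis by simp
qed

lemma (in finite_measure) scaled_measure_UN_le:
  fixes B D :: "nat \<Rightarrow> 'a set"
  assumes B: "range B \<subseteq> sets M" "disjoint_family B"
    and D: "range D \<subseteq> sets M" "\<And>k. D k \<subseteq> B k"
    and scaled: "\<And>k. c * measure M (B k) \<le> measure M (D k)"
  shows "c * measure M (\<Union>k. B k) \<le> measure M (\<Union>k. D k)"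
proof -
  have "disjoint_family D" using B(2) D(2) by (rule disjoint_family_subset)
  with D(1) have D_sums: "(\<lambda>k. measure M (D k)) sums measure M (\<Union>k. D k)"
    by (rule finite_measure_UNION)
  have B_sums: "(\<lambda>k. c * measure M (B k)) sums (c * measure M (\<Union>k. B k))"
    using finite_measure_UNION[OF B] by (rule sums_mult)
  show ?thesis using scaled B_sums D_sums by (rule sums_le)
qed

lemma enat_incseq_skips_values_above:
  fixes f :: "nat \<Rightarrow> enat"
  assumes mono: "\<And>k. f k \<le> f (Suc k)"
    and "f k = enat m" and "f (Suc k) = \<infinity>" and "m < j"
  shows "f i \<noteq> enat j"
proof (cases "i \<le> k")
  case True
  then show ?thesis using lift_Suc_mono_le[of f, OF mono True] assms(2,4) by auto
next
  case False
  then show ?thesis using lift_Suc_mono_le[of f "Suc k" i, OF mono] assms(3) by auto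
qed

lemma sparse_stopping_times_level_sets_escape:
  assumes "finite_measure M" and filt: "nat_filtration M F"
    and st: "\<And>k. enat_stopping_time M F (\<nu> k)"
    and mono: "\<And>k x. x \<in> space M \<Longrightarrow> \<nu> k x \<le> \<nu> (Suc k) x"
    and sparse: "sparse_stopping_times M F \<nu>"
    and A: "A \<in> sets (F m)" "A \<subseteq> (\<Union>k. {x \<in> space M. \<nu> k x = enat m})"
  shows "1/2 * measure M A
    \<le> measure M (A - (\<Union>j\<in>{Suc m..}. \<Union>k. {x \<in> space M. \<nu> k x = enat j}))"
proof -
  interpret finite_measure M by fact
  define L where "L k = {x \<in> space M. \<nu> k x = enat m}" for k
  define B where "B k = A \<inter> disjointed L k" for k
  define E where "E k = {x \<in> space M. \<nu> k x < \<infinity>}" for k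
  have B_F: "B k \<in> sets (F m)" for k
    using sets.range_disjointed_sets[of L] enat_stopping_time_eq_sets[OF filt st] A(1)
    unfolding B_def L_def by blast
  have B_M: "range B \<subseteq> sets M" using B_F nat_filtration_sets_subset[OF filt] by blast
  have B_level: "x \<in> space M \<and> \<nu> k x = enat m" if "x \<in> B k" for x k
    using that disjointed_subset[of L k] unfolding B_def L_def by blast
  have B_UN: "(\<Union>k. B k) = A"
    using A(2) unfolding B_def Int_UN_distrib[symmetric] UN_disjointed_eq L_def by blast
  have B_disj: "disjoint_family B"
    by (rule disjoint_family_subset[OF disjoint_family_disjointed[of L]]) (simp add: B_def)
  have E_M: "E k \<in> sets M" for k
    unfolding E_def by (rule enat_stopping_time_finite_sets[OF filt st])
  have half_escapes: "1/2 * measure M (B k) \<le> measure M (B k - E (Suc k))" for k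
  proof -
    have "B k \<in> stopped_sets M F (\<nu> k)"
      by (rule stopped_setsI_constant[OF filt B_F]) (use B_level in blast)
    moreover have "B k \<subseteq> {x \<in> space M. \<nu> k x < \<infinity>}"
      using B_level by auto
    ultimately show ?thesis
      unfolding E_def
      by (rule sparse_stopping_times_half_escapes[OF \<open>finite_measure M\<close> filt st sparse])
  qed
  have "1/2 * measure M A = 1/2 * measure M (\<Union>k. B k)"
    by (simp add: B_UN)
  also have "\<dots> \<le> measure M (\<Union>k. B k - E (Suc k))"
    by (rule scaled_measure_UN_le[OF B_M B_disj _ _ half_escapes]) (use B_M E_M in auto)
  also have "\<dots> \<le> measure M (A - (\<Union>j\<in>{Suc m..}. \<Union>k. {x \<in> space M. \<nu> k x = enat j}))"
  proof (rule finite_measure_mono)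
    show "(\<Union>k. B k - E (Suc k)) \<subseteq> A - (\<Union>j\<in>{Suc m..}. \<Union>k. {x \<in> space M. \<nu> k x = enat j})"
    proof
      fix x assume "x \<in> (\<Union>k. B k - E (Suc k))"
      then obtain k where "x \<in> B k" "x \<notin> E (Suc k)" by blast
      then have "x \<in> A" and x: "x \<in> space M" "\<nu> k x = enat m" "\<nu> (Suc k) x = \<infinity>"
        using B_level unfolding B_def E_def by auto
      have "\<nu> i x \<noteq> enat j" if "Suc m \<le> j" for i j
        using enat_incseq_skips_values_above[of "\<lambda>k. \<nu> k x", OF mono[OF x(1)] x(2,3)] that
        by simp
      with \<open>x \<in> A\<close> show "x \<in> A - (\<Union>j\<in>{Suc m..}. \<Union>k. {x \<in> space M. \<nu> k x = enat j})"
        by blast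
    qed
    have "(\<Union>k. {x \<in> space M. \<nu> k x = enat j}) \<in> sets M" for j
      using nat_filtration_sets_subset[OF filt] enat_stopping_times_UN_eq_sets[OF filt st]
      by (rule subsetD)
    moreover have "A \<in> sets M"
      using A(1) nat_filtration_sets_subset[OF filt] by blast
    ultimately show "A - (\<Union>j\<in>{Suc m..}. \<Union>k. {x \<in> space M. \<nu> k x = enat j}) \<in> sets M"
      by (intro sets.Diff sets.countable_UN') auto
  qed
  finally show ?thesis .
qed

theorem lemma1p3:
  fixes M :: "'a measure" and F :: "nat \<Rightarrow> 'a measure" and \<nu> :: "nat \<Rightarrow> 'a \<Rightarrow> enat"
  assumes "prob_space M"
    and "nat_filtration M F"
    and "\<And>k. enat_stopping_time M F (\<nu> k)"
    and "\<And>k x. x \<in> space M \<Longrightarrow> \<nu> k x \<le> \<nu> (Suc k) x"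
    and "sparse_stopping_times M F \<nu>"
  shows "eta_sparse_sets M F (1/2) (\<lambda>m. \<Union>k. {x \<in> space M. \<nu> k x = enat m})"
proof -
  have "finite_measure M"
    using assms(1) by (simp add: prob_space_def)
  show ?thesis
    unfolding eta_sparse_sets_def
  proof (intro conjI allI impI)
    show "(\<Union>k. {x \<in> space M. \<nu> k x = enat m}) \<in> sets (F m)" for m
      by (rule enat_stopping_times_UN_eq_sets[OF assms(2,3)])
    show "1/2 * measure M A
        \<le> measure M (A - (\<Union>j\<in>{Suc m..}. \<Union>k. {x \<in> space M. \<nu> k x = enat j}))"
      if "A \<in> sets (F m) \<and> A \<subseteq> (\<Union>k. {x \<in> space M. \<nu> k x = enat m})" for m A
      using sparse_stopping_times_level_sets_escape[OF \<open>finite_measure M\<close> assms(2-5)] that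
      by blast
  qed
qed

end
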